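(* Let $R$ be a commutative ring, $F$ a free $R$-module with basis $e_1,\dots,e_n$, $\varphi:F\to R$ an $R$-linear map, $M$ an $R$-module and $t\ge 0$. Define $\gamma_t:K_{s+t}(\varphi,M)\to K_s(\varphi,K_t(\varphi,M))=\bigwedge^sF\otimes_R K_t(\varphi,M)$ for every $s\ge 0$ by $\gamma_t(f)=\sum_{\#I=s}e_I\otimes b_I$, where $b_I$ is determined by the decomposition $f=a_I+e_I.b_I$. Then $\gamma_t$ is a map of complexes $K(\varphi,M)\to K(\varphi,K_t(\varphi,M))[-t]$, i.e. $\gamma_t$ commutes with the Koszul differentials (the differential on $K(\varphi,K_t(\varphi,M))$ being the Koszul differential of $\varphi$ with coefficients in the module $K_t(\varphi,M)$).
   Context: The Koszul complex is $K(\varphi,N)=\bigwedge^\bullet F\otimes_R N$ for an $R$-module $N$, with $K_t(\varphi,N)=\bigwedge^tF\otimes_R N$ and differential $e_{i_1}\wedge\cdots\wedge e_{i_s}\otimes m\mapsto \sum_{j=1}^s(-1)^{j+1}e_{i_1}\wedge\cdots\widehat{e_{i_j}}\cdots\wedge e_{i_s}\otimes \varphi(e_{i_j})m$. The exterior algebra acts on $K(\varphi,M)$ by left multiplication, written $a.f$. For $I=\{i_1<\dots<i_s\}$, $e_I=e_{i_1}\wedge\cdots\wedge e_{i_s}$. Every $f\in K_r(\varphi,M)$ is uniquely $\sum_{\#J=r}e_J\otimes m_J$; $e_J$ appears in $f$ if $m_J\ne0$. For $f\in K_{s+t}(\varphi,M)$ and $\#I=s$ there is a unique decomposition $f=a_I+e_I.b_I$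 with $a_I\in K_{s+t}(\varphi,M)$, $b_I\in K_t(\varphi,M)$, no $e_J$ with $J\supseteq I$ appearing in $a_I$, and no $e_S$ with $S\cap I\ne\emptyset$ appearing in $b_I$. *)

theory Defs
  imports Main "HOL.Modules" "HOL-Library.Function_Algebras"
begin

text \<open>F is free with basis e_1..e_n
  (indices {1..n}); phi : F -> R is given by its values x i = phi(e_i).
  An element of K_r(phi,N) = wedge^r F (x) N is written uniquely as
  sum over #J = r of e_J (x) m_J; we represent it by its coefficient
  function J |-> m_J (a map nat set => N vanishing outside the r-subsets
  of {1..n}).\<close>

definition in_K :: "nat \<Rightarrow> nat \<Rightarrow> (nat set \<Rightarrow> 'b::zero) \<Rightarrow> bool" where
  "in_K n r f \<longleftrightarrow> (\<forall>J. f J \<noteq> 0 \<longrightarrow> J \<subseteq> {1..n} \<and> card J = r)"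

text \<open>Sign with e_I /\ e_L = wsign I L * e_(I Un L) for disjoint I, L.\<close>
definition wsign :: "nat set \<Rightarrow> nat set \<Rightarrow> 'r::comm_ring_1" where
  "wsign I L = (-1) ^ card {(i,k). i \<in> I \<and> k \<in> L \<and> k < i}"

text \<open>Koszul differential with coefficients in a module (scalar action scale):
  e_{i_1}..e_{i_s} (x) m |-> sum_j (-1)^(j+1) e_{..omit i_j..} (x) phi(e_{i_j}) m,
  written in coordinates: (-1)^(j+1) = (-1)^#{elements of J below i}.\<close>
definition koszul_d :: "('r::comm_ring_1 \<Rightarrow> 'b \<Rightarrow> 'b) \<Rightarrow> nat \<Rightarrow> (nat \<Rightarrow> 'r)
    \<Rightarrow> (nat set \<Rightarrow> 'b::comm_monoid_add) \<Rightarrow> nat set \<Rightarrow> 'b" where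
  "koszul_d scale n x f J =
     (if J \<subseteq> {1..n}
      then (\<Sum>i\<in>{1..n} - J. scale ((-1) ^ card {j\<in>J. j < i} * x i) (f (insert i J)))
      else 0)"

text \<open>Left multiplication by e_I (exterior algebra action): e_I . b.\<close>
definition wedge_act :: "('r::comm_ring_1 \<Rightarrow> 'b \<Rightarrow> 'b) \<Rightarrow> nat set
    \<Rightarrow> (nat set \<Rightarrow> 'b::zero) \<Rightarrow> nat set \<Rightarrow> 'b" where
  "wedge_act scale I b J = (if I \<subseteq> J then scale (wsign I (J - I)) (b (J - I)) else 0)"

text \<open>The component b_I of the unique decomposition f = a_I + e_I . b_I,
  for f in K_(s+t), #I = s.\<close>
definition b_comp :: "('r::comm_ring_1 \<Rightarrow> 'b \<Rightarrow> 'b) \<Rightarrow> nat \<Rightarrow> nat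
    \<Rightarrow> (nat set \<Rightarrow> 'b::ab_group_add) \<Rightarrow> nat set \<Rightarrow> (nat set \<Rightarrow> 'b)" where
  "b_comp scale n t f I = (THE b. in_K n t b \<and> (\<forall>S. S \<inter> I \<noteq> {} \<longrightarrow> b S = 0) \<and>
      (\<exists>a. in_K n (card I + t) a \<and> (\<forall>J. I \<subseteq> J \<longrightarrow> a J = 0) \<and>
           f = (\<lambda>J. a J + wedge_act scale I b J)))"

definition gamma :: "('r::comm_ring_1 \<Rightarrow> 'b \<Rightarrow> 'b) \<Rightarrow> nat \<Rightarrow> nat \<Rightarrow> nat
    \<Rightarrow> (nat set \<Rightarrow> 'b::ab_group_add) \<Rightarrow> nat set \<Rightarrow> (nat set \<Rightarrow> 'b)" where
  "gamma scale n s t f I =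
     (if I \<subseteq> {1..n} \<and> card I = s then b_comp scale n t f I else 0)"

definition scale_K :: "('r \<Rightarrow> 'b \<Rightarrow> 'b) \<Rightarrow> 'r \<Rightarrow> (nat set \<Rightarrow> 'b) \<Rightarrow> nat set \<Rightarrow> 'b" where
  "scale_K scale r g = (\<lambda>J. scale r (g J))"

end

theory Submission
  imports Defs
begin

text \<open>
  For f in K_(s+t) and an s-subset I, the component b_I of the
  decomposition f = a_I + e_I.b_I is the contraction of f by e_I: its coefficient
  at a t-set L disjoint from I is wsign I L times the coefficient of f at I Un L
  (because e_I /\ e_L = wsign I L e_(I Un L) and wsign I L squares to 1).  Hence
  gamma_t(f) has I-component contract I f.

  The theorem then reduces, coefficientwise, to the statement that contraction
  commutes with the Koszul differential: for a set J and a set L disjoint from J,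
  summing the contractions of f by e_(J + i) against the signed x_i gives the
  contraction of d f by e_J.  This rests on one sign identity: moving e_i into
  e_J and then past e_L produces the same sign as moving e_i into e_(J Un L).

  In lemma2p3, coefficients at s-subsets J are handled by the
  commutation lemma; at all other J both sides vanish for degree reasons.
\<close>

section \<open>Signs of wedge products\<close>

text \<open>Reordering signs are involutions; this makes e_I . _ invertible on its image.\<close>
lemma wsign_square: "(wsign I L :: 'r::comm_ring_1) * wsign I L = 1"
  unfolding wsign_def by (simp flip: power_mult_distrib)

lemma wsign_insert:
  assumes "finite J" "finite L" "i \<notin> J"
  shows "(wsign (insert i J) L :: 'r::comm_ring_1) = wsign J L * (-1) ^ card {k\<in>L. k < i}"
proof -
  let ?P = "\<lambda>J. {(a,k). a \<in> J \<and> k \<in> L \<and> k < a}"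
  have eq: "?P (insert i J) = ?P J \<union> Pair i ` {k\<in>L. k < i}" by auto
  have fin: "finite (?P J)" by (rule finite_subset[of _ "J \<times> L"]) (use assms in auto)
  have disj: "?P J \<inter> Pair i ` {k\<in>L. k < i} = {}" using assms by auto
  have "card (Pair i ` {k\<in>L. k < i}) = card {k\<in>L. k < i}"
    by (rule card_image) (simp add: inj_on_def)
  then show ?thesis unfolding wsign_def eq
    using assms by (simp add: card_Un_disjoint[OF fin _ disj] power_add)
qed

lemma koszul_sign_split:
  assumes "finite J" "finite L" "J \<inter> L = {}" "i \<notin> J"
  shows "(wsign (insert i J) L :: 'r::comm_ring_1) * (-1) ^ card {j\<in>J. j < i}
           = wsign J L * (-1) ^ card {k\<in>J \<union> L. k < i}"
proof -
  have "{k\<in>J \<union> L. k < i} = {k\<in>J. k < i} \<union> {k\<in>L. k < i}" by auto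
  moreover have "{k\<in>J. k < i} \<inter> {k\<in>L. k < i} = {}" using assms(3) by auto
  ultimately have count: "card {k\<in>J \<union> L. k < i} = card {k\<in>J. k < i} + card {k\<in>L. k < i}"
    using assms(1,2) by (simp add: card_Un_disjoint)
  show ?thesis
    by (simp only: wsign_insert[OF assms(1,2,4)] count power_add mult_ac)
qed

section \<open>Contraction by e_I\<close>

text \<open>The contraction of g by e_I: the coefficient at L of the element b with
  g = a + e_I.b, where a has no e_J with J containing I.\<close>
definition contract :: "('r::comm_ring_1 \<Rightarrow> 'b \<Rightarrow> 'b) \<Rightarrow> nat set
    \<Rightarrow> (nat set \<Rightarrow> 'b::zero) \<Rightarrow> nat set \<Rightarrow> 'b" where
  "contract scale I g L = (if L \<inter> I = {} then scale (wsign I L) (g (I \<union> L)) else 0)"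

lemma contract_in_K:
  assumes "module scale" "finite I" "in_K n (card I + t) g"
  shows "in_K n t (contract scale I g)"
  unfolding in_K_def
proof (intro allI impI)
  interpret module scale by (rule assms(1))
  fix L assume "contract scale I g L \<noteq> 0"
  then have disj: "L \<inter> I = {}" and "g (I \<union> L) \<noteq> 0"
    by (auto simp: contract_def split: if_splits)
  with assms(3) have sub: "I \<union> L \<subseteq> {1..n}" and "card (I \<union> L) = card I + t"
    unfolding in_K_def by blast+
  moreover have "finite L" using sub finite_subset by blast
  ultimately show "L \<subseteq> {1..n} \<and> card L = t"
    using assms(2) disj by (simp add: card_Un_disjoint inf_commute)
qed

lemma contract_decomposition:
  assumes "module scale"
  shows "g = (\<lambda>J. (if I \<subseteq> J then 0 else g J) + wedge_act scale I (contract scale I g) J)"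
proof
  interpret module scale by (rule assms)
  fix J
  show "g J = (if I \<subseteq> J then 0 else g J) + wedge_act scale I (contract scale I g) J"
  proof (cases "I \<subseteq> J")
    case True
    then have "I \<union> (J - I) = J" "(J - I) \<inter> I = {}" by blast+
    then show ?thesis using True by (simp add: wedge_act_def contract_def wsign_square)
  qed (simp add: wedge_act_def)
qed

lemma contract_unique:
  assumes "module scale"
    and b_vanishes: "\<forall>S. S \<inter> I \<noteq> {} \<longrightarrow> b S = 0"
    and a_vanishes: "\<forall>J. I \<subseteq> J \<longrightarrow> a J = 0"
    and decomp: "g = (\<lambda>J. a J + wedge_act scale I b J)"
  shows "b = contract scale I g"
proof
  interpret module scale by (rule assms(1))
  fix L
  show "b L = contract scale I g L"
  proof (cases "L \<inter> I = {}")
    case True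
    then have "(I \<union> L) - I = L" by blast
    then have "g (I \<union> L) = scale (wsign I L) (b L)"
      using a_vanishes by (subst decomp) (simp add: wedge_act_def)
    then show ?thesis using True by (simp add: contract_def wsign_square)
  qed (use b_vanishes in \<open>simp add: contract_def\<close>)
qed

lemma b_comp_eq_contract:
  assumes "module scale" "finite I" "in_K n (card I + t) g"
  shows "b_comp scale n t g I = contract scale I g"
  unfolding b_comp_def
proof (rule the_equality)
  let ?a = "\<lambda>J. if I \<subseteq> J then 0 else g J"
  have "in_K n (card I + t) ?a" using assms(3) unfolding in_K_def by auto
  moreover have "\<forall>J. I \<subseteq> J \<longrightarrow> ?a J = 0" by simp
  moreover have "g = (\<lambda>J. ?a J + wedge_act scale I (contract scale I g) J)"
    using assms(1) by (rule contract_decomposition)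
  moreover have "in_K n t (contract scale I g)" using assms by (rule contract_in_K)
  moreover have "\<forall>S. S \<inter> I \<noteq> {} \<longrightarrow> contract scale I g S = 0"
    by (simp add: contract_def)
  ultimately show "in_K n t (contract scale I g) \<and> (\<forall>S. S \<inter> I \<noteq> {} \<longrightarrow> contract scale I g S = 0) \<and>
      (\<exists>a. in_K n (card I + t) a \<and> (\<forall>J. I \<subseteq> J \<longrightarrow> a J = 0) \<and>
           g = (\<lambda>J. a J + wedge_act scale I (contract scale I g) J))"
    by blast
next
  fix b
  assume "in_K n t b \<and> (\<forall>S. S \<inter> I \<noteq> {} \<longrightarrow> b S = 0) \<and>
      (\<exists>a. in_K n (card I + t) a \<and> (\<forall>J. I \<subseteq> J \<longrightarrow> a J = 0) \<and>
           g = (\<lambda>J. a J + wedge_act scale I b J))"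
  then obtain a where "\<forall>S. S \<inter> I \<noteq> {} \<longrightarrow> b S = 0" "\<forall>J. I \<subseteq> J \<longrightarrow> a J = 0"
      "g = (\<lambda>J. a J + wedge_act scale I b J)"
    by blast
  with assms(1) show "b = contract scale I g" by (rule contract_unique)
qed

lemma gamma_eq_contract:
  assumes "module scale" "I \<subseteq> {1..n}" "card I = s" "in_K n (s + t) f"
  shows "gamma scale n s t f I = contract scale I f"
proof -
  have "finite I" using assms(2) finite_subset by blast
  then show ?thesis
    using assms by (simp add: gamma_def b_comp_eq_contract)
qed

section \<open>Contraction commutes with the Koszul differential\<close>

lemma koszul_d_in_K:
  assumes "module scale" "in_K n (Suc r) f"
  shows "in_K n r (koszul_d scale n x f)"
  unfolding in_K_def
proof (intro allI impI)
  fix J assume nz: "koszul_d scale n x f J \<noteq> 0"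
  then have J: "J \<subseteq> {1..n}" by (auto simp: koszul_d_def split: if_splits)
  with nz have "(\<Sum>i\<in>{1..n} - J. scale ((-1) ^ card {j\<in>J. j < i} * x i) (f (insert i J))) \<noteq> 0"
    unfolding koszul_d_def by simp
  then obtain i where i: "i \<in> {1..n} - J"
    and "scale ((-1) ^ card {j\<in>J. j < i} * x i) (f (insert i J)) \<noteq> 0"
    by (rule sum.not_neutral_contains_not_neutral)
  then have "f (insert i J) \<noteq> 0" using module.scale_zero_right[OF assms(1)] by auto
  with assms(2) have "card (insert i J) = Suc r" unfolding in_K_def by blast
  moreover have "finite J" using J finite_subset by blast
  ultimately show "J \<subseteq> {1..n} \<and> card J = r" using i J by simp
qed

lemma koszul_d_contract:
  assumes "module scale" "in_K n r f" "J \<subseteq> {1..n}"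
  shows "(\<Sum>i\<in>{1..n} - J. scale ((-1) ^ card {j\<in>J. j < i} * x i) (contract scale (insert i J) f L))
           = contract scale J (koszul_d scale n x f) L"
    (is "?lhs = _")
proof -
  interpret module scale by (rule assms(1))
  have finJ: "finite J" using assms(3) finite_subset by blast
  consider "L \<inter> J \<noteq> {}" | "L \<inter> J = {}" "\<not> L \<subseteq> {1..n}" | "L \<inter> J = {}" "L \<subseteq> {1..n}"
    by blast
  then show ?thesis
  proof cases
    case 1
    then show ?thesis by (simp add: contract_def)
  next
    case 2
    then have "f (insert i J \<union> L) = 0" for i
      using assms(2) unfolding in_K_def by blast
    then have "?lhs = 0" by (intro sum.neutral) (simp add: contract_def)
    then show ?thesis using 2 by (simp add: contract_def koszul_d_def)
  next
    case 3
    then have disj: "J \<inter> L = {}" and finL: "finite L" using finite_subset by blast+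
    have "?lhs = (\<Sum>i\<in>{1..n} - (J \<union> L).
                    scale ((-1) ^ card {j\<in>J. j < i} * x i) (contract scale (insert i J) f L))"
      by (rule sum.mono_neutral_right) (auto simp: contract_def)
    also have "\<dots> = (\<Sum>i\<in>{1..n} - (J \<union> L). scale (wsign J L)
                 (scale ((-1) ^ card {k\<in>J \<union> L. k < i} * x i) (f (insert i (J \<union> L)))))"
    proof (rule sum.cong[OF refl])
      fix i assume i: "i \<in> {1..n} - (J \<union> L)"
      then have "L \<inter> insert i J = {}" "insert i J \<union> L = insert i (J \<union> L)" using disj by auto
      then have contr: "contract scale (insert i J) f L
          = scale (wsign (insert i J) L) (f (insert i (J \<union> L)))"
        by (simp add: contract_def)
      have "(-1) ^ card {j\<in>J. j < i} * x i * wsign (insert i J) L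
          = x i * (wsign (insert i J) L * (-1) ^ card {j\<in>J. j < i})"
        by (simp add: mult_ac)
      also have "\<dots> = x i * (wsign J L * (-1) ^ card {k\<in>J \<union> L. k < i})"
        using i by (simp add: koszul_sign_split[OF finJ finL disj])
      also have "\<dots> = wsign J L * ((-1) ^ card {k\<in>J \<union> L. k < i} * x i)"
        by (simp add: mult_ac)
      finally have sign: "(-1) ^ card {j\<in>J. j < i} * x i * wsign (insert i J) L
          = wsign J L * ((-1) ^ card {k\<in>J \<union> L. k < i} * x i)" .
      show "scale ((-1) ^ card {j\<in>J. j < i} * x i) (contract scale (insert i J) f L)
          = scale (wsign J L) (scale ((-1) ^ card {k\<in>J \<union> L. k < i} * x i) (f (insert i (J \<union> L))))"
        by (simp only: contr scale_scale sign)
    qed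
    also have "\<dots> = contract scale J (koszul_d scale n x f) L"
      using 3 assms(3) by (simp add: contract_def koszul_d_def scale_sum_right Un_commute)
    finally show ?thesis .
  qed
qed

lemma module_scale_K:
  assumes "module scale"
  shows "module (scale_K scale)"
proof -
  interpret module scale by (rule assms)
  show ?thesis
    by unfold_locales (simp_all add: scale_K_def fun_eq_iff scale_right_distrib scale_left_distrib)
qed

lemma sum_fun_apply: "(sum g A) L = (\<Sum>i\<in>A. g i L)"
  by (induct A rule: infinite_finite_induct) (simp_all add: zero_fun_def plus_fun_def)

lemma koszul_d_scale_K_apply:
  "koszul_d (scale_K scale) n x G J L =
     (if J \<subseteq> {1..n}
      then (\<Sum>i\<in>{1..n} - J. scale ((-1) ^ card {j\<in>J. j < i} * x i) (G (insert i J) L))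
      else 0)"
  by (simp add: koszul_d_def scale_K_def sum_fun_apply)

lemma gamma_in_K: "in_K n s (gamma scale n s t f)"
  unfolding in_K_def gamma_def by auto

theorem lemma2p3:
  fixes scale :: "'r::comm_ring_1 \<Rightarrow> 'm::ab_group_add \<Rightarrow> 'm"
    and n s t :: nat and x :: "nat \<Rightarrow> 'r" and f :: "nat set \<Rightarrow> 'm"
  assumes "module scale"
    and "in_K n (Suc s + t) f"
  shows "koszul_d (scale_K scale) n x (gamma scale n (Suc s) t f)
           = gamma scale n s t (koszul_d scale n x f)"
proof
  fix J
  show "koszul_d (scale_K scale) n x (gamma scale n (Suc s) t f) J
          = gamma scale n s t (koszul_d scale n x f) J"
  proof (cases "J \<subseteq> {1..n} \<and> card J = s")
    case J: True
    then have gamma_succ: "gamma scale n (Suc s) t f (insert i J) = contract scale (insert i J) f"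
      if "i \<in> {1..n} - J" for i
      using that assms finite_subset[of J "{1..n}"] by (intro gamma_eq_contract) auto
    have df: "in_K n (s + t) (koszul_d scale n x f)"
      using koszul_d_in_K[OF assms(1)] assms(2) by simp
    show ?thesis
    proof
      fix L
      show "koszul_d (scale_K scale) n x (gamma scale n (Suc s) t f) J L
          = gamma scale n s t (koszul_d scale n x f) J L"
        using J koszul_d_contract[OF assms, of J x L]
        by (simp add: koszul_d_scale_K_apply gamma_succ gamma_eq_contract[OF assms(1) _ _ df])
    qed
  next
    case False
    have "in_K n s (koszul_d (scale_K scale) n x (gamma scale n (Suc s) t f))"
      using module_scale_K[OF assms(1)] gamma_in_K by (rule koszul_d_in_K)
    with False show ?thesis using gamma_in_K[of n s] unfolding in_K_def by metis
  qed
qed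

end
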